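(* Run the algorithm POLAR described in the context with ridge parameter $\lambda\ge 1$, and suppose $\|x_t\|_2\le1$ for all $t$. On the event $$\mathcal{E}:=\bigl\{\,|x_t^\top(\hat\theta_{a,t}-\theta_a^\star)|\le\beta_t\,s_{a,t}\ \text{for all } a\in\mathcal{M},\ t\le T\,\bigr\},$$ we have $$\sum_{t=1}^T\Bigl[\max_{a\in\mathcal{M}}\mu_t(a;C_{\ell(t)})-\mu_t(a_t;C_{\ell(t)})\Bigr]\le 2\beta_T\sqrt{2NdT\log\Bigl(1+\frac{T}{d\lambda}\Bigr)}.$$
   Context: Library $\mathcal{M}=\{1,\dots,N\}$, cache size $K$, contexts $x_t\in\mathbb{R}^d$, unknown $\theta_a^\star\in\mathbb{R}^d$, known penalties $\lambda_a>0$, weight $\alpha>0$, switching cost $\gamma>0$. Playing $a_t$ reveals $q_t(a_t)=\langle\theta_{a_t}^\star,x_t\rangle+\eta_t(a_t)$. A cache $C_\ell$ ($|C_\ell|\le K$) is fixed in epoch $\ell$; $\ell(t)$ is the epoch of round $t$; $\mu_t(a;C):=\langle\theta_a^\star,x_t\rangle-\alpha\lambda_a\mathbf{1}\{a\notin C\}$. Define $V_{a,t}:=\lambda I_d+\sum_{s<t}\mathbf{1}\{a_s=a\}x_sx_s^\top$, $\hat\theta_{a,t}:=V_{a,t}^{-1}\sum_{s<t}\mathbf{1}\{a_s=a\}q_s(a)x_s$, $s_{a,t}:=\sqrt{x_t^\top V_{a,t}^{-1}x_t}$, $\beta_t:=\sigma\sqrt{d\log(1+\tfrac{t}{d\lambda})+2\log\tfrac{N}{\delta}}+\sqrt\lambda$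 (a nondecreasing sequence), and $\mathrm{score}_t(a):=\langle\hat\theta_{a,t},x_t\rangle+\beta_ts_{a,t}-\alpha\lambda_a\mathbf{1}\{a\notin C_{\ell(t)}\}$. Algorithm POLAR: epochs of $H$ rounds; $C_1$ arbitrary with $|C_1|\le K$; at each epoch boundary $\ell>1$ the cache is replaced by the output of a greedy marginal-gain procedure (adding at most $K$ adapters, based on UCB values $\langle\hat\theta_a,x_t\rangle+\beta_t\sqrt{x_t^\top V_a^{-1}x_t}$ on the previous epoch's contexts, penalties $\alpha\lambda_a$ and switching cost $\gamma$); in every round it plays $a_t\in\arg\max_a\mathrm{score}_t(a)$, observes $q_t(a_t)$ and updates $V_{a_t},\hat\theta_{a_t}$. *)

theory Defs
  imports "HOL-Analysis.Analysis"
begin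

(* Rounds are indexed t = 1, 2, ...; arms form a finite type 'arm (N = CARD('arm));
   contexts live in real^'d (d = CARD('d)). *)

definition outer :: "real^'d \<Rightarrow> real^'d^'d" where
  "outer v = (\<chi> i j. v$i * v$j)"

definition Vmat :: "real \<Rightarrow> (nat \<Rightarrow> real^'d) \<Rightarrow> (nat \<Rightarrow> 'arm) \<Rightarrow> 'arm \<Rightarrow> nat \<Rightarrow> real^'d^'d" where
  "Vmat lam x act a t = lam *\<^sub>R mat 1 + (\<Sum>s\<in>{s\<in>{1..<t}. act s = a}. outer (x s))"

(* ridge estimate; q s is the observed reward q_s(a_s) *)
definition theta_hat :: "real \<Rightarrow> (nat \<Rightarrow> real^'d) \<Rightarrow> (nat \<Rightarrow> 'arm) \<Rightarrow> (nat \<Rightarrow> real) \<Rightarrow> 'arm \<Rightarrow> nat \<Rightarrow> real^'d" where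
  "theta_hat lam x act q a t =
     matrix_inv (Vmat lam x act a t) *v (\<Sum>s\<in>{s\<in>{1..<t}. act s = a}. q s *\<^sub>R x s)"

definition swidth :: "real \<Rightarrow> (nat \<Rightarrow> real^'d) \<Rightarrow> (nat \<Rightarrow> 'arm) \<Rightarrow> 'arm \<Rightarrow> nat \<Rightarrow> real" where
  "swidth lam x act a t = sqrt (x t \<bullet> (matrix_inv (Vmat lam x act a t) *v x t))"

definition betaT :: "real \<Rightarrow> real \<Rightarrow> real \<Rightarrow> nat \<Rightarrow> nat \<Rightarrow> nat \<Rightarrow> real" where
  "betaT sig lam delta N d t =
     sig * sqrt (real d * ln (1 + real t / (real d * lam)) + 2 * ln (real N / delta)) + sqrt lam"

definition epoch :: "nat \<Rightarrow> nat \<Rightarrow> nat" where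
  "epoch H t = (t - 1) div H + 1"

definition mu :: "('arm \<Rightarrow> real^'d) \<Rightarrow> (nat \<Rightarrow> real^'d) \<Rightarrow> ('arm \<Rightarrow> real) \<Rightarrow> real
                  \<Rightarrow> 'arm set \<Rightarrow> nat \<Rightarrow> 'arm \<Rightarrow> real" where
  "mu theta x pen alpha C t a = theta a \<bullet> x t - alpha * pen a * (if a \<notin> C then 1 else 0)"

definition score :: "real \<Rightarrow> real \<Rightarrow> real \<Rightarrow> (nat \<Rightarrow> real^'d) \<Rightarrow> (nat \<Rightarrow> 'arm::finite) \<Rightarrow> (nat \<Rightarrow> real)
                  \<Rightarrow> ('arm \<Rightarrow> real) \<Rightarrow> real \<Rightarrow> 'arm set \<Rightarrow> nat \<Rightarrow> 'arm \<Rightarrow> real" where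
  "score sig lam delta x act q pen alpha C t a =
     theta_hat lam x act q a t \<bullet> x t
     + betaT sig lam delta CARD('arm) CARD('d) t * swidth lam x act a t
     - alpha * pen a * (if a \<notin> C then 1 else 0)"

end

theory Submission
  imports Defs
begin

(* On the confidence event the played adapter maximises an upper confidence bound on mu, so the
   regret of round t is at most 2 beta_t s_{a_t,t} <= 2 beta_T s_{a_t,t}. By Cauchy-Schwarz the
   sum of the widths is at most sqrt (T * sum of squared widths), and the squared widths split
   over the N adapters. For one adapter this is the elliptical potential lemma: s^2 <= 1 gives
   s^2 <= 2 ln (1 + s^2), the factors 1 + s^2 telescope by the matrix determinant lemma
   det (V + x x^T) = det V (1 + x^T V^-1 x) to det V_{T+1} / lam^d, and Hadamard's inequality
   followed by AM-GM on the diagonal gives det V_{T+1} <= (lam + T / d)^d. Hadamard's inequality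
   comes from symmetric Gaussian elimination, which keeps positive definiteness and the
   determinant and does not increase the diagonal. *)

section \<open>The matrix determinant lemma\<close>

lemma det_identity_replace_row:
  fixes w :: "'a::field^'n"
  shows "det (\<chi> i. if i = k then w else axis i 1) = w$k"
proof -
  have rows: "row i (mat 1 :: 'a^'n^'n) = axis i 1" for i
    by (simp add: row_def mat_def axis_def vec_eq_iff)
  have "(\<Sum>i\<in>UNIV. w$i *s axis i (1::'a)) = w"
    by (simp add: vec_eq_iff sum_component axis_def if_distrib cong: if_cong)
  then show ?thesis
    using cramer_lemma_transpose[of k w "mat 1 :: 'a^'n^'n"] by (simp add: rows cong: if_cong)
qed

lemma det_identity_replace_row_shear:
  fixes u v :: "'a::field^'n"
  assumes "finite S" "k \<notin> S"
  shows "det (\<chi> i. if i = k then v else if i \<in> S then axis i 1 + u$i *s v else axis i 1) = v$k"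
  using assms
proof (induction S rule: finite_induct)
  case empty
  then show ?case using det_identity_replace_row[of k v] by (simp cong: if_cong)
next
  case (insert j S)
  let ?A = "(\<chi> i. if i = k then v else if i \<in> S then axis i 1 + u$i *s v else axis i 1) :: 'a^'n^'n"
  have "j \<noteq> k" using insert by auto
  have "(\<chi> i. if i = k then v else if i \<in> insert j S then axis i 1 + u$i *s v else axis i 1)
     = (\<chi> m. if m = j then row j ?A + (u$j) *s row k ?A else row m ?A)"
    using insert \<open>j \<noteq> k\<close> by (auto simp: vec_eq_iff row_def)
  then show ?case
    using det_row_operation[OF \<open>j \<noteq> k\<close>, of ?A "u$j"] insert by simp
qed

lemma det_identity_add_rank1:
  fixes u v :: "real^'n"
  shows "det (mat 1 + (\<chi> i j. u$i * v$j)) = 1 + u \<bullet> v"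
proof -
  have partial: "det (\<chi> i. if i \<in> S then axis i 1 + u$i *s v else axis i (1::real))
      = 1 + (\<Sum>i\<in>S. u$i * v$i)" if "finite S" for S
    using that
  proof (induction S rule: finite_induct)
    case empty
    have "(\<chi> i. axis i (1::real)) = (mat 1 :: real^'n^'n)"
      by (simp add: vec_eq_iff mat_def axis_def)
    then show ?case by simp
  next
    case (insert k S)
    let ?r = "\<lambda>i. if i \<in> S then axis i 1 + u$i *s v else axis i (1::real)"
    have split: "(\<chi> i. if i \<in> insert k S then axis i 1 + u$i *s v else axis i 1)
       = (\<chi> i. if i = k then axis k 1 + u$k *s v else ?r i)"
      by (rule Cart_lambda_cong) auto
    have "(\<chi> i. if i = k then axis k 1 else ?r i) = (\<chi> i. ?r i)"
      using insert by (intro Cart_lambda_cong) auto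
    moreover have "det (\<chi> i. if i = k then v else ?r i) = v$k"
      using det_identity_replace_row_shear[where u = u and v = v, OF insert(1,2)] by (simp cong: if_cong)
    ultimately show ?case
      unfolding split det_row_add det_row_mul using insert by simp
  qed
  have "mat 1 + (\<chi> i j. u$i * v$j) = (\<chi> i. if i \<in> UNIV then axis i 1 + u$i *s v else axis i (1::real))"
    by (auto simp: vec_eq_iff mat_def axis_def)
  then show ?thesis
    using partial[of UNIV] by (simp add: inner_vec_def)
qed

section \<open>Positive definite matrices and Hadamard's inequality\<close>

definition positive_definite :: "real^'n^'n \<Rightarrow> bool" where
  "positive_definite A \<longleftrightarrow> (\<forall>y. y \<noteq> 0 \<longrightarrow> 0 < y \<bullet> (A *v y))"

lemma positive_definite_diag_pos:
  assumes "positive_definite A"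
  shows "0 < A$i$i"
proof -
  have "0 < axis i 1 \<bullet> (A *v axis i 1)"
    using assms unfolding positive_definite_def by (simp add: axis_eq_0_iff)
  then show ?thesis
    by (simp add: matrix_vector_mult_basis inner_axis' column_def)
qed

lemma positive_definite_invertible:
  assumes "positive_definite A"
  shows "invertible A"
proof -
  have "\<forall>y. A *v y = 0 \<longrightarrow> y = 0"
    using assms unfolding positive_definite_def by (metis inner_zero_right less_irrefl)
  then show ?thesis
    using matrix_left_invertible_ker invertible_left_inverse by blast
qed

lemma positive_definite_congruence:
  fixes A E :: "real^'n^'n"
  assumes "positive_definite A" "invertible E"
  shows "positive_definite (E ** A ** transpose E)"
  unfolding positive_definite_def
proof (intro allI impI)
  fix y :: "real^'n"
  assume "y \<noteq> 0"
  have "invertible (transpose E)"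
    using assms(2) by (simp add: invertible_det_nz det_transpose)
  then have "transpose E *v y \<noteq> 0"
    using \<open>y \<noteq> 0\<close> by (metis inj_matrix_vector_mult injD matrix_vector_mult_0_right)
  then have "0 < (transpose E *v y) \<bullet> (A *v (transpose E *v y))"
    using assms(1) unfolding positive_definite_def by blast
  also have "\<dots> = y \<bullet> ((E ** A) *v (transpose E *v y))"
    by (simp add: dot_lmul_matrix matrix_vector_mul_assoc)
  also have "\<dots> = y \<bullet> ((E ** A ** transpose E) *v y)"
    by (simp only: matrix_vector_mul_assoc)
  finally show "0 < y \<bullet> ((E ** A ** transpose E) *v y)" .
qed

lemma symmetric_matrix_entry:
  assumes "transpose A = A"
  shows "A$i$j = A$j$i"
proof -
  have "transpose A $j$i = A$j$i"
    using assms by simp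
  then show ?thesis
    by (simp add: transpose_def)
qed

(* E A E^T for the unimodular E = I + u e_k^T with u = e_k - A e_k / A_kk: row and column k
   are cleared and the pivot A_kk is kept. *)
definition pivot_eliminate :: "'n \<Rightarrow> real^'n^'n \<Rightarrow> real^'n^'n" where
  "pivot_eliminate k A =
     (\<chi> i j. A$i$j - A$i$k * A$k$j / A$k$k + (if i = k \<and> j = k then A$k$k else 0))"

lemma pivot_eliminate_congruence:
  fixes A :: "real^'n^'n"
  assumes sym: "transpose A = A" and pivot: "A$k$k \<noteq> 0"
  shows "\<exists>E. det E = 1 \<and> pivot_eliminate k A = E ** A ** transpose E"
proof -
  define a where "a = A$k$k"
  define u :: "real^'n" where "u = (\<chi> i. (if i = k then 1 else 0) - A$i$k / a)"
  define E :: "real^'n^'n" where "E = mat 1 + (\<chi> i j. u$i * axis k 1 $ j)"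
  have u_entry: "u$i = (if i = k then 1 else 0) - A$i$k / a" for i
    by (simp add: u_def)
  have E_entry: "E$i$j = (if i = j then 1 else 0) + (if j = k then u$i else 0)" for i j
    by (simp add: E_def mat_def axis_def)
  have EA: "(E ** A)$i$j = A$i$j + u$i * A$k$j" for i j
    by (simp add: matrix_matrix_mult_def E_entry distrib_right sum.distrib
        if_distrib[of "\<lambda>x. x * _"] cong: if_cong)
  have EAE: "(E ** A ** transpose E)$i$j = A$i$j + u$i * A$k$j + u$j * (A$i$k + u$i * a)" for i j
    by (simp add: matrix_matrix_mult_def[of "E ** A"] EA transpose_def E_entry a_def distrib_left
        distrib_right sum.distrib if_distrib[of "\<lambda>x. _ * x"] if_distrib[of "\<lambda>x. x * _"] cong: if_cong)
  have "pivot_eliminate k A $i$j = (E ** A ** transpose E)$i$j" for i j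
  proof -
    have "A$j$k = A$k$j" "a \<noteq> 0"
      using symmetric_matrix_entry[OF sym] pivot by (auto simp: a_def)
    then show ?thesis
      unfolding EAE u_entry pivot_eliminate_def a_def[symmetric]
      by (cases "i = k"; cases "j = k") (simp_all add: field_simps a_def)
  qed
  moreover have "det E = 1"
    using det_identity_add_rank1[of u "axis k 1"] pivot by (simp add: E_def inner_axis u_def a_def)
  ultimately show ?thesis
    by (auto simp: vec_eq_iff)
qed

lemma symmetric_pivot_eliminate:
  "transpose A = A \<Longrightarrow> transpose (pivot_eliminate k A) = pivot_eliminate k A"
  by (auto simp: vec_eq_iff transpose_def pivot_eliminate_def dest: symmetric_matrix_entry)

lemma det_pivot_eliminate:
  assumes "transpose A = A" "A$k$k \<noteq> 0"
  shows "det (pivot_eliminate k A) = det A"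
  using pivot_eliminate_congruence[OF assms] by (auto simp: det_mul det_transpose)

lemma positive_definite_pivot_eliminate:
  assumes "transpose A = A" "positive_definite A"
  shows "positive_definite (pivot_eliminate k A)"
proof -
  have "A$k$k \<noteq> 0"
    using positive_definite_diag_pos[OF assms(2), of k] by simp
  then obtain E where "det E = 1" "pivot_eliminate k A = E ** A ** transpose E"
    using pivot_eliminate_congruence[OF assms(1)] by blast
  then show ?thesis
    using positive_definite_congruence[OF assms(2), of E] by (simp add: invertible_det_nz)
qed

lemma pivot_eliminate_diag_le:
  assumes "transpose A = A" "positive_definite A"
  shows "pivot_eliminate k A $i$i \<le> A$i$i"
proof -
  have "A$k$i = A$i$k"
    using assms(1) by (rule symmetric_matrix_entry)
  then have "0 \<le> A$i$k * A$k$i / A$k$k"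
    using positive_definite_diag_pos[OF assms(2), of k] by simp
  then show ?thesis
    using positive_definite_diag_pos[OF assms(2), of k] by (auto simp: pivot_eliminate_def)
qed

lemma pivot_eliminate_pivot_row: "A$k$k \<noteq> 0 \<Longrightarrow> j \<noteq> k \<Longrightarrow> pivot_eliminate k A $k$j = 0"
  by (simp add: pivot_eliminate_def)

lemma pivot_eliminate_cleared_row: "A$i$k = 0 \<Longrightarrow> i \<noteq> k \<Longrightarrow> pivot_eliminate k A $i$j = A$i$j"
  by (simp add: pivot_eliminate_def)

lemma positive_definite_partial_diagonalisation:
  fixes A :: "real^'n^'n"
  assumes "finite S" "transpose A = A" "positive_definite A"
  shows "\<exists>D. transpose D = D \<and> positive_definite D \<and> det D = det A \<and> (\<forall>i. D$i$i \<le> A$i$i)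
          \<and> (\<forall>i\<in>S. \<forall>j. j \<noteq> i \<longrightarrow> D$i$j = 0)"
  using assms
proof (induction S rule: finite_induct)
  case empty
  then show ?case by blast
next
  case (insert k S)
  then obtain D where D: "transpose D = D" "positive_definite D" "det D = det A"
    "\<forall>i. D$i$i \<le> A$i$i" "\<forall>i\<in>S. \<forall>j. j \<noteq> i \<longrightarrow> D$i$j = 0"
    by blast
  let ?D = "pivot_eliminate k D"
  have pivot: "D$k$k \<noteq> 0"
    using positive_definite_diag_pos[OF D(2), of k] by simp
  have "?D$i$j = 0" if "i \<in> insert k S" "j \<noteq> i" for i j
  proof (cases "i = k")
    case True
    then show ?thesis using pivot_eliminate_pivot_row[OF pivot] that by simp
  next
    case False
    then have "i \<in> S" "D$i$k = 0"
      using that D(5) by auto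
    then show ?thesis
      using pivot_eliminate_cleared_row[of D i k] False D(5) that by simp
  qed
  moreover have "?D$i$i \<le> A$i$i" for i
    using order_trans[OF pivot_eliminate_diag_le[OF D(1,2)]] D(4) by blast
  ultimately show ?case
    using symmetric_pivot_eliminate[OF D(1)] positive_definite_pivot_eliminate[OF D(1,2)]
      det_pivot_eliminate[OF D(1) pivot] D(3)
    by (intro exI[of _ ?D]) simp
qed

lemma hadamard_inequality:
  fixes A :: "real^'n^'n"
  assumes "transpose A = A" "positive_definite A"
  shows "0 < det A" "det A \<le> (\<Prod>i\<in>UNIV. A$i$i)"
proof -
  obtain D where D: "positive_definite D" "det D = det A" "\<forall>i. D$i$i \<le> A$i$i"
    "\<forall>i j. j \<noteq> i \<longrightarrow> D$i$j = 0"
    using positive_definite_partial_diagonalisation[OF finite[of UNIV] assms] by blast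
  have det_D: "det D = (\<Prod>i\<in>UNIV. D$i$i)"
    using D(4) by (intro det_diagonal) auto
  have pos: "0 < D$i$i" for i
    using positive_definite_diag_pos[OF D(1)] .
  have "0 < (\<Prod>i\<in>UNIV. D$i$i)"
    using pos by (intro prod_pos) auto
  then show "0 < det A"
    using D(2) det_D by simp
  show "det A \<le> (\<Prod>i\<in>UNIV. A$i$i)"
    unfolding D(2)[symmetric] det_D using pos D(3) by (intro prod_mono) (simp add: less_imp_le)
qed

lemma ln_det_le_trace:
  fixes A :: "real^'n^'n"
  assumes "transpose A = A" "positive_definite A"
  shows "ln (det A) \<le> real CARD('n) * ln (trace A / real CARD('n))"
proof -
  let ?n = "real CARD('n)"
  define m where "m = trace A / ?n"
  have pos: "0 < A$i$i" for i
    using positive_definite_diag_pos[OF assms(2)] .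
  have trace: "trace A = (\<Sum>i\<in>UNIV. A$i$i)"
    by (simp add: trace_def)
  have "0 < trace A"
    unfolding trace using pos by (simp add: sum_pos)
  then have "0 < m"
    by (simp add: m_def)
  have "ln (det A) \<le> ln (\<Prod>i\<in>UNIV. A$i$i)"
    using hadamard_inequality[OF assms] by simp
  also have "\<dots> = (\<Sum>i\<in>UNIV. ln (A$i$i))"
    using pos by (simp add: ln_prod less_imp_neq[symmetric])
  also have "\<dots> \<le> (\<Sum>i\<in>UNIV. ln m + (A$i$i / m - 1))"
  proof (rule sum_mono)
    fix i
    have "ln (A$i$i / m) \<le> A$i$i / m - 1"
      using pos[of i] \<open>0 < m\<close> by (intro ln_le_minus_one) simp
    then show "ln (A$i$i) \<le> ln m + (A$i$i / m - 1)"
      using pos[of i] \<open>0 < m\<close> by (simp add: ln_div)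
  qed
  also have "\<dots> = ?n * ln m + (trace A / m - ?n)"
    by (simp add: sum.distrib trace sum_subtractf flip: sum_divide_distrib)
  also have "trace A / m = ?n"
    using \<open>0 < trace A\<close> by (simp add: m_def)
  finally show ?thesis
    by (simp add: m_def)
qed

section \<open>Inverse quadratic forms and rank-one updates\<close>

lemma matrix_vector_mul_matrix_inv:
  fixes A :: "real^'n^'n"
  assumes "invertible A"
  shows "A *v (matrix_inv A *v w) = w"
proof -
  have "\<exists>A'. A ** A' = mat 1 \<and> A' ** A = mat 1"
    using assms unfolding invertible_def by blast
  then have "A ** matrix_inv A = mat 1"
    unfolding matrix_inv_def by (rule someI2_ex) blast
  then show ?thesis
    by (simp add: matrix_vector_mul_assoc)
qed

lemma inner_matrix_inv_bounds:
  fixes A :: "real^'n^'n"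
  assumes lam: "0 < lam" and lower: "\<And>y. lam * (y \<bullet> y) \<le> y \<bullet> (A *v y)"
  shows "0 \<le> w \<bullet> (matrix_inv A *v w)" "w \<bullet> (matrix_inv A *v w) \<le> (norm w)^2 / lam"
proof -
  define z where "z = matrix_inv A *v w"
  have "positive_definite A"
    unfolding positive_definite_def using lam lower by (metis inner_gt_zero_iff mult_pos_pos order_less_le_trans)
  then have "A *v z = w"
    unfolding z_def by (intro matrix_vector_mul_matrix_inv positive_definite_invertible)
  then have lower_z: "lam * (norm z)^2 \<le> w \<bullet> z"
    using lower[of z] by (simp add: power2_norm_eq_inner inner_commute)
  then show "0 \<le> w \<bullet> (matrix_inv A *v w)"
    unfolding z_def[symmetric] using lam by (meson order_trans zero_le_power2 mult_nonneg_nonneg less_imp_le)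
  have cauchy: "w \<bullet> z \<le> norm w * norm z"
    by (rule norm_cauchy_schwarz)
  have "lam * norm z \<le> norm w"
  proof (cases "norm z = 0")
    case False
    have "(lam * norm z) * norm z \<le> norm w * norm z"
      using lower_z cauchy by (simp add: power2_eq_square mult.assoc)
    then show ?thesis
      using False by (simp add: mult_le_cancel_right)
  qed simp
  then have "norm w * norm z \<le> norm w * (norm w / lam)"
    using lam by (intro mult_left_mono) (simp_all add: field_simps)
  then show "w \<bullet> (matrix_inv A *v w) \<le> (norm w)^2 / lam"
    unfolding z_def[symmetric] using cauchy by (simp add: power2_eq_square)
qed

lemma det_add_outer:
  fixes A :: "real^'n^'n"
  assumes "invertible A"
  shows "det (A + outer w) = det A * (1 + w \<bullet> (matrix_inv A *v w))"
proof -
  define u where "u = matrix_inv A *v w"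
  have "A ** (\<chi> i j. u$i * w$j) = outer w"
  proof -
    have "(A ** (\<chi> i j. u$i * w$j))$i$j = (A *v u)$i * w$j" for i j
      by (simp add: matrix_matrix_mult_def matrix_vector_mult_def sum_distrib_right mult.assoc)
    then show ?thesis
      using matrix_vector_mul_matrix_inv[OF assms] by (simp add: vec_eq_iff outer_def u_def)
  qed
  then have "A + outer w = A ** (mat 1 + (\<chi> i j. u$i * w$j))"
    by (simp add: matrix_add_ldistrib)
  then show ?thesis
    by (simp add: det_mul det_identity_add_rank1 u_def inner_commute)
qed

section \<open>The ridge Gram matrix\<close>

lemma det_scaleR_mat_1: "det (c *\<^sub>R (mat 1 :: real^'n^'n)) = c ^ CARD('n)"
  by (subst det_diagonal) (simp_all add: mat_def)

lemma inner_outer: "y \<bullet> (outer v *v y) = (v \<bullet> y)^2"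
proof -
  have "outer v *v y = (v \<bullet> y) *\<^sub>R v"
    by (simp add: vec_eq_iff outer_def matrix_vector_mult_def inner_vec_def
        sum_distrib_right sum_distrib_left mult_ac)
  then show ?thesis
    by (simp add: power2_eq_square inner_commute)
qed

lemma inner_sum_matrix_vector:
  fixes f :: "'b \<Rightarrow> real^'n^'n"
  shows "finite S \<Longrightarrow> y \<bullet> ((\<Sum>s\<in>S. f s) *v y) = (\<Sum>s\<in>S. y \<bullet> (f s *v y))"
  by (induction S rule: finite_induct) (auto simp: matrix_vector_mult_add_rdistrib inner_add_right)

lemma Vmat_quadratic_form:
  "y \<bullet> (Vmat lam x act a t *v y) = lam * (y \<bullet> y) + (\<Sum>s\<in>{s\<in>{1..<t}. act s = a}. (x s \<bullet> y)^2)"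
  by (simp add: Vmat_def matrix_vector_mult_add_rdistrib inner_add_right inner_sum_matrix_vector
      inner_outer flip: scaleR_matrix_vector_assoc)

lemma Vmat_ge_ridge: "lam * (y \<bullet> y) \<le> y \<bullet> (Vmat lam x act a t *v y)"
  unfolding Vmat_quadratic_form by (simp add: sum_nonneg)

lemma positive_definite_Vmat: "0 < lam \<Longrightarrow> positive_definite (Vmat lam x act a t)"
  unfolding positive_definite_def
  by (metis Vmat_ge_ridge inner_gt_zero_iff mult_pos_pos order_less_le_trans)

lemma Vmat_entry:
  "Vmat lam x act a t $i$j = lam * (if i = j then 1 else 0) + (\<Sum>s\<in>{s\<in>{1..<t}. act s = a}. x s$i * x s$j)"
  by (simp add: Vmat_def outer_def mat_def)

lemma symmetric_Vmat: "transpose (Vmat lam x act a t) = Vmat lam x act a t"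
  by (simp add: vec_eq_iff transpose_def Vmat_entry mult.commute)

lemma Vmat_Suc:
  "Vmat lam x act a (Suc t) = Vmat lam x act a t + (if 1 \<le> t \<and> act t = a then outer (x t) else 0)"
proof (cases "1 \<le> t \<and> act t = a")
  case True
  then have "{s\<in>{1..<Suc t}. act s = a} = insert t {s\<in>{1..<t}. act s = a}"
    by auto
  then show ?thesis
    using True by (simp add: Vmat_def algebra_simps)
next
  case False
  then have "{s\<in>{1..<Suc t}. act s = a} = {s\<in>{1..<t}. act s = a}"
    by (auto simp: less_Suc_eq)
  then show ?thesis
    unfolding if_not_P[OF False] by (simp add: Vmat_def)
qed

lemma trace_Vmat:
  fixes x :: "nat \<Rightarrow> real^'d"
  shows "trace (Vmat lam x act a t) = real CARD('d) * lam + (\<Sum>s\<in>{s\<in>{1..<t}. act s = a}. (norm (x s))^2)"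
proof -
  have "trace (Vmat lam x act a t) = (\<Sum>i\<in>UNIV. lam + (\<Sum>s\<in>{s\<in>{1..<t}. act s = a}. x s$i * x s$i))"
    by (simp add: trace_def Vmat_entry)
  also have "\<dots> = real CARD('d) * lam + (\<Sum>s\<in>{s\<in>{1..<t}. act s = a}. \<Sum>i\<in>UNIV. x s$i * x s$i)"
    by (simp add: sum.distrib sum.swap[of _ UNIV])
  finally show ?thesis
    by (simp add: power2_norm_eq_inner inner_vec_def)
qed

section \<open>The elliptical potential lemma\<close>

(* Not automatic: sqrt is negative on negative reals. *)
lemma swidth_nonneg: "0 < lam \<Longrightarrow> 0 \<le> swidth lam x act a t"
  using inner_matrix_inv_bounds(1)[OF _ Vmat_ge_ridge] by (simp add: swidth_def)

lemma swidth_squared: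
  assumes "0 < lam"
  shows "(swidth lam x act a t)^2 = x t \<bullet> (matrix_inv (Vmat lam x act a t) *v x t)"
  using inner_matrix_inv_bounds(1)[OF assms Vmat_ge_ridge] by (simp add: swidth_def)

lemma swidth_squared_le:
  assumes "0 < lam"
  shows "(swidth lam x act a t)^2 \<le> (norm (x t))^2 / lam"
  using inner_matrix_inv_bounds(2)[OF assms Vmat_ge_ridge] by (simp add: swidth_squared[OF assms])

lemma det_Vmat_eq_prod:
  fixes x :: "nat \<Rightarrow> real^'d"
  assumes "0 < lam"
  shows "det (Vmat lam x act a (Suc T))
           = lam ^ CARD('d) * (\<Prod>t\<in>{t\<in>{1..T}. act t = a}. 1 + (swidth lam x act a t)^2)"
proof (induction T)
  case 0
  then show ?case by (simp add: Vmat_def det_scaleR_mat_1)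
next
  case (Suc T)
  let ?V = "Vmat lam x act a (Suc T)"
  show ?case
  proof (cases "act (Suc T) = a")
    case True
    then have "{t\<in>{1..Suc T}. act t = a} = insert (Suc T) {t\<in>{1..T}. act t = a}"
      by auto
    moreover have "det (Vmat lam x act a (Suc (Suc T))) = det ?V * (1 + (swidth lam x act a (Suc T))^2)"
      using True det_add_outer[OF positive_definite_invertible[OF positive_definite_Vmat[OF assms]]]
      by (simp add: Vmat_Suc[of lam x act a "Suc T"] swidth_squared[OF assms])
    ultimately show ?thesis
      using Suc.IH by (simp add: mult_ac)
  next
    case False
    then have "{t\<in>{1..Suc T}. act t = a} = {t\<in>{1..T}. act t = a}"
      by (auto simp: le_Suc_eq)
    then show ?thesis
      using False Suc.IH by (simp add: Vmat_Suc[of lam x act a "Suc T"])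
  qed
qed

lemma self_le_two_ln_one_plus:
  fixes u :: real
  assumes "0 \<le> u" "u \<le> 1"
  shows "u \<le> 2 * ln (1 + u)"
proof -
  have "ln (1 / (1 + u)) \<le> 1 / (1 + u) - 1"
    using assms by (intro ln_le_minus_one) simp
  then have "u / (1 + u) \<le> ln (1 + u)"
    using assms by (simp add: ln_div field_simps)
  moreover have "u / 2 \<le> u / (1 + u)"
    using assms by (intro divide_left_mono) auto
  ultimately show ?thesis
    by linarith
qed

lemma sum_swidth_squared_le_ln_det:
  fixes x :: "nat \<Rightarrow> real^'d"
  assumes lam: "1 \<le> lam" and ctx: "\<And>t. norm (x t) \<le> 1"
  shows "(\<Sum>t\<in>{t\<in>{1..T}. act t = a}. (swidth lam x act a t)^2)
           \<le> 2 * (ln (det (Vmat lam x act a (Suc T))) - real CARD('d) * ln lam)"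
proof -
  let ?S = "{t\<in>{1..T}. act t = a}"
  let ?P = "\<Prod>t\<in>?S. 1 + (swidth lam x act a t)^2"
  have "0 < lam"
    using lam by simp
  have width_le_1: "(swidth lam x act a t)^2 \<le> 1" for t
  proof -
    have "(norm (x t))^2 \<le> 1"
      using ctx[of t] by (simp add: power_le_one)
    then have "(norm (x t))^2 / lam \<le> 1"
      using lam by (simp add: divide_le_eq)
    then show ?thesis
      by (rule order_trans[OF swidth_squared_le[OF \<open>0 < lam\<close>]])
  qed
  have "(\<Sum>t\<in>?S. (swidth lam x act a t)^2) \<le> (\<Sum>t\<in>?S. 2 * ln (1 + (swidth lam x act a t)^2))"
    using width_le_1 by (intro sum_mono self_le_two_ln_one_plus) simp_all
  also have "\<dots> = 2 * ln ?P"
    by (simp add: ln_prod sum_distrib_left add_nonneg_eq_0_iff)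
  also have "ln ?P = ln (det (Vmat lam x act a (Suc T))) - real CARD('d) * ln lam"
    using \<open>0 < lam\<close> by (simp add: det_Vmat_eq_prod ln_mult_pos ln_realpow prod_pos add_pos_nonneg)
  finally show ?thesis .
qed

lemma ln_det_Vmat_le:
  fixes x :: "nat \<Rightarrow> real^'d"
  assumes "0 < lam" and ctx: "\<And>t. norm (x t) \<le> 1"
  shows "ln (det (Vmat lam x act a (Suc T))) - real CARD('d) * ln lam
           \<le> real CARD('d) * ln (1 + real T / (real CARD('d) * lam))"
proof -
  let ?V = "Vmat lam x act a (Suc T)"
  let ?d = "real CARD('d)"
  have "(\<Sum>s\<in>{s\<in>{1..<Suc T}. act s = a}. (norm (x s))^2) \<le> real (card {s\<in>{1..<Suc T}. act s = a})"
    using sum_mono[of _ "\<lambda>s. (norm (x s))^2" "\<lambda>_. 1"] ctx by (simp add: power_le_one)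
  also have "\<dots> \<le> real (card {1..<Suc T})"
    by (intro of_nat_mono card_mono) auto
  finally have "trace ?V \<le> ?d * lam + real T"
    by (simp add: trace_Vmat)
  moreover have "0 < trace ?V"
    using \<open>0 < lam\<close> by (simp add: trace_Vmat add_pos_nonneg sum_nonneg)
  ultimately have "ln (trace ?V) \<le> ln (?d * lam + real T)"
    by simp
  then have "ln (trace ?V / ?d) - ln lam \<le> ln ((?d * lam + real T) / (?d * lam))"
    using \<open>0 < lam\<close> \<open>0 < trace ?V\<close> by (simp add: ln_div ln_mult_pos add_pos_nonneg)
  also have "(?d * lam + real T) / (?d * lam) = 1 + real T / (?d * lam)"
    using \<open>0 < lam\<close> by (simp add: field_simps)
  finally have "?d * (ln (trace ?V / ?d) - ln lam) \<le> ?d * ln (1 + real T / (?d * lam))"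
    by (intro mult_left_mono) simp_all
  moreover have "ln (det ?V) \<le> ?d * ln (trace ?V / ?d)"
    using ln_det_le_trace[OF symmetric_Vmat positive_definite_Vmat[OF \<open>0 < lam\<close>]] .
  ultimately show ?thesis
    by (simp add: algebra_simps)
qed

lemma elliptical_potential:
  fixes x :: "nat \<Rightarrow> real^'d"
  assumes lam: "1 \<le> lam" and ctx: "\<And>t. norm (x t) \<le> 1"
  shows "(\<Sum>t\<in>{t\<in>{1..T}. act t = a}. (swidth lam x act a t)^2)
           \<le> 2 * real CARD('d) * ln (1 + real T / (real CARD('d) * lam))"
proof -
  have "0 < lam"
    using lam by simp
  have "(\<Sum>t\<in>{t\<in>{1..T}. act t = a}. (swidth lam x act a t)^2)
          \<le> 2 * (ln (det (Vmat lam x act a (Suc T))) - real CARD('d) * ln lam)"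
    by (rule sum_swidth_squared_le_ln_det[OF lam ctx])
  also have "\<dots> \<le> 2 * (real CARD('d) * ln (1 + real T / (real CARD('d) * lam)))"
    using ln_det_Vmat_le[OF \<open>0 < lam\<close> ctx] by (rule mult_left_mono) simp
  finally show ?thesis
    by simp
qed

section \<open>Regret of the optimistic policy\<close>

lemma betaT_mono:
  assumes "0 \<le> sig" "0 \<le> lam" "t \<le> T"
  shows "betaT sig lam delta N d t \<le> betaT sig lam delta N d T"
proof -
  have "real t / (real d * lam) \<le> real T / (real d * lam)"
    using assms by (intro divide_right_mono) auto
  then have "ln (1 + real t / (real d * lam)) \<le> ln (1 + real T / (real d * lam))"
    using assms by (subst ln_le_cancel_iff) (auto intro: add_pos_nonneg)
  then show ?thesis
    unfolding betaT_def using assms(1) by (intro add_right_mono mult_left_mono real_sqrt_le_mono) simp_all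
qed

lemma betaT_nonneg:
  assumes "0 \<le> sig" "0 \<le> lam" "0 < delta" "delta \<le> real N"
  shows "0 \<le> betaT sig lam delta N d T"
proof -
  have "0 \<le> ln (1 + real T / (real d * lam))"
    using assms by (intro ln_ge_zero) simp
  moreover have "0 \<le> ln (real N / delta)"
    using assms by (intro ln_ge_zero) (simp add: le_divide_eq)
  ultimately show ?thesis
    unfolding betaT_def using assms by simp
qed

lemma mu_gap_le_width:
  fixes theta :: "'arm::finite \<Rightarrow> real^'d" and sig lam delta :: real and t :: nat
  defines "\<beta> \<equiv> betaT sig lam delta CARD('arm) CARD('d) t"
  assumes play: "score sig lam delta x act q pen alpha C t b \<le> score sig lam delta x act q pen alpha C t (act t)"
    and conf: "\<And>a. \<bar>x t \<bullet> (theta_hat lam x act q a t - theta a)\<bar> \<le> \<beta> * swidth lam x act a t"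
  shows "mu theta x pen alpha C t b - mu theta x pen alpha C t (act t) \<le> 2 * \<beta> * swidth lam x act (act t) t"
proof -
  have "x t \<bullet> (theta_hat lam x act q a t - theta a) = theta_hat lam x act q a t \<bullet> x t - theta a \<bullet> x t" for a
    by (simp add: inner_diff_right inner_commute)
  then show ?thesis
    using play conf[of b] conf[of "act t"] unfolding mu_def score_def \<beta>_def[symmetric]
    by (simp add: abs_le_iff)
qed

lemma sum_swidth_played_le:
  fixes x :: "nat \<Rightarrow> real^'d" and act :: "nat \<Rightarrow> 'arm::finite"
  assumes "1 \<le> lam" "\<And>t. norm (x t) \<le> 1"
  shows "(\<Sum>t=1..T. swidth lam x act (act t) t)
           \<le> sqrt (2 * real CARD('arm) * real CARD('d) * real T * ln (1 + real T / (real CARD('d) * lam)))"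
proof -
  let ?L = "2 * real CARD('d) * ln (1 + real T / (real CARD('d) * lam))"
  have "(\<Sum>t=1..T. (swidth lam x act (act t) t)^2)
          = (\<Sum>a\<in>UNIV. \<Sum>t\<in>{t\<in>{1..T}. act t = a}. (swidth lam x act a t)^2)"
    by (subst sum.group[symmetric, where g = act]) (auto intro!: sum.cong)
  also have "\<dots> \<le> (\<Sum>a\<in>(UNIV::'arm set). ?L)"
    using elliptical_potential[OF assms] by (rule sum_mono)
  finally have "(\<Sum>t=1..T. (swidth lam x act (act t) t)^2) \<le> real CARD('arm) * ?L"
    by simp
  moreover have "(\<Sum>t=1..T. swidth lam x act (act t) t)^2 \<le> (\<Sum>t=1..T. (swidth lam x act (act t) t)^2) * real T"
    using sum_squared_le_sum_of_squares[of _ "{1..T}"] by simp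
  ultimately have "(\<Sum>t=1..T. swidth lam x act (act t) t)^2 \<le> real CARD('arm) * ?L * real T"
    by (meson mult_right_mono of_nat_0_le_iff order_trans)
  then show ?thesis
    by (intro real_le_rsqrt) (simp add: mult_ac)
qed

theorem lemmaC2:
  fixes theta :: "'arm::finite \<Rightarrow> real^'d"
    and x :: "nat \<Rightarrow> real^'d"
    and act :: "nat \<Rightarrow> 'arm"
    and q eta :: "nat \<Rightarrow> real"
    and pen :: "'arm \<Rightarrow> real"
    and C :: "nat \<Rightarrow> 'arm set"
    and alpha lam sig delta :: real
    and H K T :: nat
  assumes lam: "lam \<ge> 1"
    and alpha: "alpha > 0"
    and pen: "\<And>a. pen a > 0"
    and sig: "sig > 0"
    and delta: "0 < delta" "delta < 1"
    and H: "H > 0"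
    and cache: "\<And>l. card (C l) \<le> K"
    and ctx: "\<And>t. norm (x t) \<le> 1"
    and obs: "\<And>t. q t = theta (act t) \<bullet> x t + eta t"
    and play: "\<And>t b. 1 \<le> t \<Longrightarrow>
         score sig lam delta x act q pen alpha (C (epoch H t)) t b
           \<le> score sig lam delta x act q pen alpha (C (epoch H t)) t (act t)"
    and event: "\<And>a t. 1 \<le> t \<Longrightarrow> t \<le> T \<Longrightarrow>
         \<bar>x t \<bullet> (theta_hat lam x act q a t - theta a)\<bar>
           \<le> betaT sig lam delta CARD('arm) CARD('d) t * swidth lam x act a t"
  shows "(\<Sum>t=1..T. Max (range (mu theta x pen alpha (C (epoch H t)) t))
                     - mu theta x pen alpha (C (epoch H t)) t (act t))
         \<le> 2 * betaT sig lam delta CARD('arm) CARD('d) T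
             * sqrt (2 * real CARD('arm) * real CARD('d) * real T
                     * ln (1 + real T / (real CARD('d) * lam)))"
proof -
  define \<beta> where "\<beta> = betaT sig lam delta CARD('arm) CARD('d)"
  define gap where "gap t = Max (range (mu theta x pen alpha (C (epoch H t)) t))
                             - mu theta x pen alpha (C (epoch H t)) t (act t)" for t
  have "1 \<le> real CARD('arm)"
    by (simp add: Suc_le_eq)
  then have "0 \<le> \<beta> T"
    unfolding \<beta>_def using sig lam delta by (intro betaT_nonneg) linarith+
  have "gap t \<le> 2 * \<beta> T * swidth lam x act (act t) t" if "t \<in> {1..T}" for t
  proof -
    have "Max (range (mu theta x pen alpha (C (epoch H t)) t)) \<in> range (mu theta x pen alpha (C (epoch H t)) t)"
      by (rule Max_in) auto
    then obtain b where "Max (range (mu theta x pen alpha (C (epoch H t)) t)) = mu theta x pen alpha (C (epoch H t)) t b"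
      by blast
    then have "gap t = mu theta x pen alpha (C (epoch H t)) t b - mu theta x pen alpha (C (epoch H t)) t (act t)"
      by (simp add: gap_def)
    also have "\<dots> \<le> 2 * \<beta> t * swidth lam x act (act t) t"
      unfolding \<beta>_def using that by (intro mu_gap_le_width[where q = q] play event) auto
    also have "\<dots> \<le> 2 * \<beta> T * swidth lam x act (act t) t"
      unfolding \<beta>_def using that sig lam
      by (intro mult_right_mono mult_left_mono betaT_mono swidth_nonneg) simp_all
    finally show ?thesis .
  qed
  then have "(\<Sum>t=1..T. gap t) \<le> 2 * \<beta> T * (\<Sum>t=1..T. swidth lam x act (act t) t)"
    unfolding sum_distrib_left by (rule sum_mono)
  also have "\<dots> \<le> 2 * \<beta> T * sqrt (2 * real CARD('arm) * real CARD('d) * real T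
                                   * ln (1 + real T / (real CARD('d) * lam)))"
    using \<open>0 \<le> \<beta> T\<close> sum_swidth_played_le[OF lam ctx] by (intro mult_left_mono) simp_all
  finally show ?thesis
    unfolding gap_def \<beta>_def .
qed

end
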